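(* Let $\mathsf{X}\in\{\mathsf{F},\mathsf{V}\}$. If $K\subseteq\Sigma^*$ is $\leftarrow$-reducible to $L\subseteq\Gamma^*$ via a Mealy machine with $d$ states, then $X_K(n) \le 2d\cdot X_L(n)$ for all $n$. In particular, for any function $s(n)$ the classes $\mathsf{F}(\mathcal{O}(s))$ and $\mathsf{V}(\mathcal{O}(s))$ are closed under $\leftarrow$-reductions.
   Context: A Mealy machine $(Q,\Sigma,\Gamma,q_0,\delta)$ with finite $Q$ and $\delta\colon Q\times\Sigma\to Q\times\Gamma$ defines $\tau_q$ by $\tau_q(\varepsilon)=\varepsilon$, $\tau_p(bu)=c\,\tau_q(u)$ if $\delta(p,b)=(q,c)$; it computes the $\leftarrow$-transduction $x\mapsto\tau_{q_0}(x^\mathsf{R})^\mathsf{R}$ ($^\mathsf{R}$ = word reversal). This is a $\leftarrow$-reduction from $K$ to $L$ if $x\in K\iff\tau(x)\in L$ for all $x\in\Sigma^*$. A streaming algorithm is a deterministic (possibly infinite-state) automaton with an injective encoding $\mathrm{enc}$ of states into bit strings. Fixed-size: fix a padding symbol in the alphabet; $\mathrm{last}_n(w)$ is the last $n$ symbols of $w$, left-padded with the padding symbol if $|w|<n$; a fixed-size algorithm for $L$ is $(\mathcal{A}_n)$ with $\mathcal{A}_n$ accepting $\{w:\mathrm{last}_n(w)\in L\}$, with space at $n$ the maximal encoding length of a state of $\mathcal{A}_n$; $F_L(n)$ is the minimum over all such algorithms. Variable-size: over alphabet $\cup\{\downarrow\}$, $\mathrm{wnd}(\varepsilon)=\varepsilon$,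 $\mathrm{wnd}(ub)=\mathrm{wnd}(u)b$, $\mathrm{wnd}(u\!\downarrow)=\varepsilon$ if $\mathrm{wnd}(u)=\varepsilon$, $\mathrm{wnd}(u\!\downarrow)=v$ if $\mathrm{wnd}(u)=bv$; an algorithm accepts $\{w:\mathrm{wnd}(w)\in L\}$ with space $v_\mathcal{A}(n)=\max\{|\mathrm{enc}(\mathcal{A}(u'))|:u'\text{ prefix of }u,\ |\mathrm{wnd}(v)|\le n\text{ for all prefixes }v\text{ of }u\}$; $V_L(n)$ is the minimum over all such algorithms. $\mathsf{X}(\mathcal{O}(s))$ is the class of languages with an $\mathsf{X}$-model algorithm of space $\mathcal{O}(s(n))$. *)

theory Defs
  imports Complex_Main "HOL-Library.Extended_Nat" "HOL-Library.Sublist"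
begin

text \<open>A streaming algorithm: a deterministic (possibly infinite-state) automaton with
state set Q (a subset of nat; since the encoding is injective into bit strings, every
state set is countable, so this is no loss of generality), initial state, transition
function, set of accepting states, and an encoding of states into bit strings that is
injective on Q.\<close>

record 'a stream_alg =
  st_states :: "nat set"
  st_init :: nat
  st_trans :: "nat \<Rightarrow> 'a \<Rightarrow> nat"
  st_acc :: "nat set"
  st_enc :: "nat \<Rightarrow> bool list"

definition wf_alg :: "'a stream_alg \<Rightarrow> bool" where
  "wf_alg A \<longleftrightarrow> st_init A \<in> st_states A
     \<and> (\<forall>q\<in>st_states A. \<forall>a. st_trans A q a \<in> st_states A)
     \<and> st_acc A \<subseteq> st_states A
     \<and> inj_on (st_enc A) (st_states A)"

definition run_alg :: "'a stream_alg \<Rightarrow> 'a list \<Rightarrow> nat" where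
  "run_alg A w = foldl (st_trans A) (st_init A) w"

definition accepts_alg :: "'a stream_alg \<Rightarrow> 'a list \<Rightarrow> bool" where
  "accepts_alg A w \<longleftrightarrow> run_alg A w \<in> st_acc A"

definition last_n :: "'a \<Rightarrow> nat \<Rightarrow> 'a list \<Rightarrow> 'a list" where
  "last_n pad n w = (if length w < n then replicate (n - length w) pad @ w
                     else drop (length w - n) w)"

definition alg_space :: "'a stream_alg \<Rightarrow> enat" where
  "alg_space A = (SUP q\<in>st_states A. enat (length (st_enc A q)))"

definition is_fixed_alg :: "'a \<Rightarrow> 'a list set \<Rightarrow> nat \<Rightarrow> 'a stream_alg \<Rightarrow> bool" where
  "is_fixed_alg pad L n A \<longleftrightarrow> wf_alg A \<and> (\<forall>w. accepts_alg A w \<longleftrightarrow> last_n pad n w \<in> L)"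

definition F_space :: "'a \<Rightarrow> 'a list set \<Rightarrow> nat \<Rightarrow> enat" where
  "F_space pad L n = (INF A\<in>{A. is_fixed_alg pad L n A}. alg_space A)"

text \<open>The extended alphabet is 'a option; None plays the role of the pop symbol.\<close>

fun wnd_step :: "'a list \<Rightarrow> 'a option \<Rightarrow> 'a list" where
  "wnd_step v (Some b) = v @ [b]"
| "wnd_step v None = tl v"

definition wnd :: "'a option list \<Rightarrow> 'a list" where
  "wnd w = foldl wnd_step [] w"

definition is_var_alg :: "'a list set \<Rightarrow> 'a option stream_alg \<Rightarrow> bool" where
  "is_var_alg L A \<longleftrightarrow> wf_alg A \<and> (\<forall>w. accepts_alg A w \<longleftrightarrow> wnd w \<in> L)"

definition var_space :: "'a option stream_alg \<Rightarrow> nat \<Rightarrow> enat" where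
  "var_space A n = Sup {enat (length (st_enc A (run_alg A u'))) | u u'.
       prefix u' u \<and> (\<forall>v. prefix v u \<longrightarrow> length (wnd v) \<le> n)}"

definition V_space :: "'a list set \<Rightarrow> nat \<Rightarrow> enat" where
  "V_space L n = (INF A\<in>{A. is_var_alg L A}. var_space A n)"

definition bigO_enat :: "(nat \<Rightarrow> enat) \<Rightarrow> (nat \<Rightarrow> real) \<Rightarrow> bool" where
  "bigO_enat f s \<longleftrightarrow> (\<exists>c N. \<forall>n\<ge>N. \<exists>k. f n = enat k \<and> real k \<le> c * s n)"

definition F_class :: "'a \<Rightarrow> (nat \<Rightarrow> real) \<Rightarrow> 'a list set set" where
  "F_class pad s = {L. \<exists>A :: nat \<Rightarrow> 'a stream_alg.
       (\<forall>n. is_fixed_alg pad L n (A n)) \<and> bigO_enat (\<lambda>n. alg_space (A n)) s}"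

definition V_class :: "(nat \<Rightarrow> real) \<Rightarrow> 'a list set set" where
  "V_class s = {L. \<exists>A. is_var_alg L A \<and> bigO_enat (var_space A) s}"

record ('q, 'a, 'b) mealy =
  m_states :: "'q set"
  m_init :: 'q
  m_delta :: "'q \<Rightarrow> 'a \<Rightarrow> 'q \<times> 'b"

definition wf_mealy :: "('q, 'a, 'b) mealy \<Rightarrow> bool" where
  "wf_mealy M \<longleftrightarrow> finite (m_states M) \<and> m_init M \<in> m_states M
     \<and> (\<forall>q\<in>m_states M. \<forall>a. fst (m_delta M q a) \<in> m_states M)"

fun mealy_tau :: "('q, 'a, 'b) mealy \<Rightarrow> 'q \<Rightarrow> 'a list \<Rightarrow> 'b list" where
  "mealy_tau M p [] = []"
| "mealy_tau M p (b # u) = snd (m_delta M p b) # mealy_tau M (fst (m_delta M p b)) u"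

definition left_transduction :: "('q, 'a, 'b) mealy \<Rightarrow> 'a list \<Rightarrow> 'b list" where
  "left_transduction M x = rev (mealy_tau M (m_init M) (rev x))"

definition is_left_reduction :: "('q, 'a, 'b) mealy \<Rightarrow> 'a list set \<Rightarrow> 'b list set \<Rightarrow> bool" where
  "is_left_reduction M K L \<longleftrightarrow> (\<forall>x. x \<in> K \<longleftrightarrow> left_transduction M x \<in> L)"

end

theory Submission
  imports Defs "HOL-Library.Countable"
begin

(* A left transduction reads its input from the right, so appending a letter a to x only
   appends c to the image, after restarting the transduction of x in the state q', where
   (q', c) = delta(q0, a).  Hence an algorithm for K can keep, for every Mealy state q, the state
   reached by the algorithm for L on the transduction of the window started in q: on reading a,
   component q is component q' advanced by c.  Padding the d component encodings to a common
   length makes the tuple decodable at a cost of a factor 2d.  In the fixed-size model the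
   components start on the transduction of a window of padding symbols; in the variable-size
   model the pop symbol is passed through, which preserves window lengths. *)

definition pad_block :: "nat \<Rightarrow> bool list \<Rightarrow> bool list" where
  "pad_block m w = w @ True # replicate (m - length w) False"

definition max_length :: "'a list list \<Rightarrow> nat" where
  "max_length ls = Max (set (map length ls))"

text \<open>Blocks of a common length m + 1 cost at most twice the longest component when m \<ge> 1;
  the tuple of empty strings, where m = 0, is encoded by the empty string.\<close>

definition encode_tuple :: "bool list list \<Rightarrow> bool list" where
  "encode_tuple ls =
     (if \<forall>w\<in>set ls. w = [] then [] else concat (map (pad_block (max_length ls)) ls))"

lemma inj_pad_block: "inj (pad_block m)"
proof (rule injI)
  fix v w assume "pad_block m v = pad_block m w"
  moreover have "dropWhile Not (rev (pad_block m u)) = True # rev u" for u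
  proof -
    have "dropWhile Not (replicate k False @ xs) = dropWhile Not xs" for k xs
      by (induction k) auto
    thus ?thesis by (simp add: pad_block_def)
  qed
  ultimately show "v = w" by (metis list.inject rev_rev_ident)
qed

lemma length_le_max_length: "w \<in> set ls \<Longrightarrow> length w \<le> max_length ls"
  by (simp add: max_length_def)

lemma length_pad_block_max_length:
  "w \<in> set ls \<Longrightarrow> length (pad_block (max_length ls) w) = max_length ls + 1"
  using length_le_max_length[of w ls] by (simp add: pad_block_def)

lemma encode_tuple_eq_concat:
  "\<exists>w\<in>set ls. w \<noteq> [] \<Longrightarrow> encode_tuple ls = concat (map (pad_block (max_length ls)) ls)"
  by (auto simp: encode_tuple_def)

lemma length_encode_tuple:
  assumes "\<exists>w\<in>set ls. w \<noteq> []"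
  shows "length (encode_tuple ls) = length ls * (max_length ls + 1)"
proof -
  have "length (encode_tuple ls) = (\<Sum>w\<leftarrow>ls. length (pad_block (max_length ls) w))"
    using assms by (simp add: encode_tuple_eq_concat length_concat comp_def)
  also have "\<dots> = (\<Sum>w\<leftarrow>ls. max_length ls + 1)"
    by (rule arg_cong[where f = sum_list], rule map_cong) (auto simp: length_pad_block_max_length)
  finally show ?thesis by (simp add: sum_list_triv)
qed

lemma encode_tuple_inj:
  assumes len: "length xs = length ys" and eq: "encode_tuple xs = encode_tuple ys"
  shows "xs = ys"
proof -
  have empty_iff: "encode_tuple zs = [] \<longleftrightarrow> (\<forall>w\<in>set zs. w = [])" for zs :: "bool list list"
  proof
    assume "encode_tuple zs = []"
    thus "\<forall>w\<in>set zs. w = []"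
      using length_encode_tuple[of zs] by (cases zs) auto
  qed (simp add: encode_tuple_def)
  show ?thesis
  proof (cases "\<forall>w\<in>set xs. w = []")
    case True
    hence "\<forall>w\<in>set ys. w = []" using eq empty_iff by metis
    with True show ?thesis using len by (metis nth_equalityI nth_mem)
  next
    case False
    hence nonempty: "\<exists>w\<in>set xs. w \<noteq> []" "\<exists>w\<in>set ys. w \<noteq> []"
      using eq empty_iff by metis+
    have "length xs * (max_length xs + 1) = length xs * (max_length ys + 1)"
      using length_encode_tuple[OF nonempty(1)] length_encode_tuple[OF nonempty(2)] eq len
      by metis
    moreover have "length xs > 0" using nonempty(1) by auto
    ultimately have "max_length xs = max_length ys" by simp
    hence block_lengths: "\<forall>u\<in>set (map (pad_block (max_length xs)) xs) \<union> set (map (pad_block (max_length xs)) ys).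
        length u = max_length xs + 1"
      using length_pad_block_max_length[of _ xs] length_pad_block_max_length[of _ ys] by auto
    have "\<forall>(u, v)\<in>set (zip (map (pad_block (max_length xs)) xs) (map (pad_block (max_length xs)) ys)).
        length u = length v"
    proof (intro ballI, clarify)
      fix u v assume "(u, v) \<in> set (zip (map (pad_block (max_length xs)) xs) (map (pad_block (max_length xs)) ys))"
      hence "u \<in> set (map (pad_block (max_length xs)) xs)" "v \<in> set (map (pad_block (max_length xs)) ys)"
        by (blast dest: set_zip_leftD set_zip_rightD)+
      thus "length u = length v" using block_lengths by simp
    qed
    moreover have "concat (map (pad_block (max_length xs)) xs) = concat (map (pad_block (max_length xs)) ys)"
      using eq \<open>max_length xs = max_length ys\<close> by (simp add: encode_tuple_eq_concat nonempty)
    ultimately have "map (pad_block (max_length xs)) xs = map (pad_block (max_length xs)) ys"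
      using len by (intro concat_injective) simp_all
    thus ?thesis using inj_pad_block by (simp add: inj_map_eq_map)
  qed
qed

lemma length_encode_tuple_le:
  assumes "\<forall>w\<in>set ls. length w \<le> s"
  shows "length (encode_tuple ls) \<le> 2 * length ls * s"
proof (cases "\<exists>w\<in>set ls. w \<noteq> []")
  case True
  then obtain w where "w \<in> set ls" "w \<noteq> []" by blast
  moreover from \<open>w \<noteq> []\<close> have "1 \<le> length w" by (cases w) auto
  ultimately have "1 \<le> max_length ls" using length_le_max_length[of w ls] by linarith
  moreover have "max_length ls \<le> s"
    unfolding max_length_def using assms \<open>w \<in> set ls\<close> by (subst Max_le_iff) auto
  ultimately have "length ls * (max_length ls + 1) \<le> length ls * (2 * s)"
    by (intro mult_le_mono2) linarith
  thus ?thesis using length_encode_tuple[OF True] by (simp add: mult.assoc mult.left_commute)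
qed (simp add: encode_tuple_def)

fun rtransd :: "('q \<Rightarrow> 'x \<Rightarrow> 'q \<times> 'y) \<Rightarrow> ('q \<Rightarrow> 'y list) \<Rightarrow> 'q \<Rightarrow> 'x list \<Rightarrow> 'y list" where
  "rtransd \<sigma> u0 q [] = u0 q"
| "rtransd \<sigma> u0 q (x # xs) = rtransd \<sigma> u0 (fst (\<sigma> q x)) xs @ [snd (\<sigma> q x)]"

definition ltransd :: "('q \<Rightarrow> 'x \<Rightarrow> 'q \<times> 'y) \<Rightarrow> ('q \<Rightarrow> 'y list) \<Rightarrow> 'q \<Rightarrow> 'x list \<Rightarrow> 'y list" where
  "ltransd \<sigma> u0 q w = rtransd \<sigma> u0 q (rev w)"

lemma ltransd_Nil [simp]: "ltransd \<sigma> u0 q [] = u0 q"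
  by (simp add: ltransd_def)

lemma ltransd_snoc [simp]:
  "ltransd \<sigma> u0 q (w @ [x]) = ltransd \<sigma> u0 (fst (\<sigma> q x)) w @ [snd (\<sigma> q x)]"
  by (simp add: ltransd_def)

lemma prefix_ltransdE:
  assumes "prefix v (ltransd \<sigma> (\<lambda>_. []) q w)"
  obtains w' q' where "prefix w' w" and "v = ltransd \<sigma> (\<lambda>_. []) q' w'"
  using assms
proof (induction w arbitrary: q v rule: rev_induct)
  case Nil
  thus ?case by auto
next
  case (snoc x w)
  from snoc.prems(2) consider "v = ltransd \<sigma> (\<lambda>_. []) q (w @ [x])"
    | "prefix v (ltransd \<sigma> (\<lambda>_. []) (fst (\<sigma> q x)) w)"
    by (auto simp: prefix_snoc)
  thus ?case
  proof cases
    case 1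
    thus ?thesis using snoc.prems(1) by blast
  next
    case 2
    thus ?thesis using snoc.IH snoc.prems(1) by (meson prefix_snoc)
  qed
qed

lemma run_alg_snoc: "run_alg A (w @ [x]) = st_trans A (run_alg A w) x"
  by (simp add: run_alg_def)

lemma run_alg_in_states: "wf_alg A \<Longrightarrow> run_alg A w \<in> st_states A"
  by (induction w rule: rev_induct) (auto simp: run_alg_snoc wf_alg_def, simp add: run_alg_def)

text \<open>A state of \<^term>\<open>parallel_alg qs A \<sigma> u0 q0\<close> is a tuple of states of \<^term>\<open>A\<close> indexed by
  \<^term>\<open>qs\<close>, coded as a natural number; component \<^term>\<open>q\<close> is the state of \<^term>\<open>A\<close> after
  reading \<^term>\<open>ltransd \<sigma> u0 q w\<close>, and component \<^term>\<open>q0\<close> decides acceptance.\<close>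

definition tuple_states :: "'q list \<Rightarrow> 'y stream_alg \<Rightarrow> nat set" where
  "tuple_states qs A = {to_nat (map f qs) | f. \<forall>q\<in>set qs. f q \<in> st_states A}"

definition tuple_comp :: "'q list \<Rightarrow> nat \<Rightarrow> 'q \<Rightarrow> nat" where
  "tuple_comp qs n q = the (map_of (zip qs (from_nat n :: nat list)) q)"

definition tuple_step ::
    "'y stream_alg \<Rightarrow> ('q \<Rightarrow> 'x \<Rightarrow> 'q \<times> 'y) \<Rightarrow> ('q \<Rightarrow> nat) \<Rightarrow> 'x \<Rightarrow> 'q \<Rightarrow> nat" where
  "tuple_step A \<sigma> f x q = st_trans A (f (fst (\<sigma> q x))) (snd (\<sigma> q x))"

definition parallel_alg :: "'q list \<Rightarrow> 'y stream_alg \<Rightarrow> ('q \<Rightarrow> 'x \<Rightarrow> 'q \<times> 'y)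
    \<Rightarrow> ('q \<Rightarrow> 'y list) \<Rightarrow> 'q \<Rightarrow> 'x stream_alg" where
  "parallel_alg qs A \<sigma> u0 q0 =
     \<lparr>st_states = tuple_states qs A,
      st_init = to_nat (map (\<lambda>q. run_alg A (u0 q)) qs),
      st_trans = (\<lambda>n x. to_nat (map (tuple_step A \<sigma> (tuple_comp qs n) x) qs)),
      st_acc = {n \<in> tuple_states qs A. tuple_comp qs n q0 \<in> st_acc A},
      st_enc = (\<lambda>n. encode_tuple (map (st_enc A) (from_nat n)))\<rparr>"

lemma parallel_alg_simps [simp]:
  "st_states (parallel_alg qs A \<sigma> u0 q0) = tuple_states qs A"
  "st_init (parallel_alg qs A \<sigma> u0 q0) = to_nat (map (\<lambda>q. run_alg A (u0 q)) qs)"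
  "st_trans (parallel_alg qs A \<sigma> u0 q0) = (\<lambda>n x. to_nat (map (tuple_step A \<sigma> (tuple_comp qs n) x) qs))"
  "st_acc (parallel_alg qs A \<sigma> u0 q0) = {n \<in> tuple_states qs A. tuple_comp qs n q0 \<in> st_acc A}"
  "st_enc (parallel_alg qs A \<sigma> u0 q0) = (\<lambda>n. encode_tuple (map (st_enc A) (from_nat n)))"
  by (simp_all add: parallel_alg_def)

lemma tuple_comp_to_nat [simp]: "q \<in> set qs \<Longrightarrow> tuple_comp qs (to_nat (map f qs)) q = f q"
  by (simp add: tuple_comp_def map_of_zip_map)

lemma tuple_statesI: "\<forall>q\<in>set qs. f q \<in> st_states A \<Longrightarrow> to_nat (map f qs) \<in> tuple_states qs A"
  unfolding tuple_states_def by blast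

lemma tuple_statesE:
  assumes "n \<in> tuple_states qs A"
  obtains f where "n = to_nat (map f qs)" and "\<forall>q\<in>set qs. f q \<in> st_states A"
  using assms unfolding tuple_states_def by blast

context
  fixes qs :: "'q list" and \<sigma> :: "'q \<Rightarrow> 'x \<Rightarrow> 'q \<times> 'y"
  assumes closed: "\<forall>q\<in>set qs. \<forall>x. fst (\<sigma> q x) \<in> set qs"
begin

lemma run_parallel_alg:
  "run_alg (parallel_alg qs A \<sigma> u0 q0) w = to_nat (map (\<lambda>q. run_alg A (ltransd \<sigma> u0 q w)) qs)"
proof (induction w rule: rev_induct)
  case Nil
  thus ?case by (simp add: run_alg_def)
next
  case (snoc x w)
  thus ?case using closed by (simp add: run_alg_snoc tuple_step_def)
qed

lemma wf_parallel_alg: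
  assumes wf: "wf_alg A"
  shows "wf_alg (parallel_alg qs A \<sigma> u0 q0)"
  unfolding wf_alg_def parallel_alg_simps
proof (intro conjI ballI allI)
  show "to_nat (map (\<lambda>q. run_alg A (u0 q)) qs) \<in> tuple_states qs A"
    using run_alg_in_states[OF wf] by (intro tuple_statesI) blast
next
  fix n x assume "n \<in> tuple_states qs A"
  then obtain f where "n = to_nat (map f qs)" and "\<forall>q\<in>set qs. f q \<in> st_states A"
    by (rule tuple_statesE)
  thus "to_nat (map (tuple_step A \<sigma> (tuple_comp qs n) x) qs) \<in> tuple_states qs A"
    using closed wf by (intro tuple_statesI) (auto simp: tuple_step_def wf_alg_def)
next
  show "inj_on (\<lambda>n. encode_tuple (map (st_enc A) (from_nat n))) (tuple_states qs A)"
  proof (rule inj_onI)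
    fix n m assume "n \<in> tuple_states qs A" "m \<in> tuple_states qs A"
      and enc: "encode_tuple (map (st_enc A) (from_nat n)) = encode_tuple (map (st_enc A) (from_nat m))"
    obtain f where n: "n = to_nat (map f qs)" and f: "\<forall>q\<in>set qs. f q \<in> st_states A"
      using \<open>n \<in> tuple_states qs A\<close> by (rule tuple_statesE)
    obtain g where m: "m = to_nat (map g qs)" and g: "\<forall>q\<in>set qs. g q \<in> st_states A"
      using \<open>m \<in> tuple_states qs A\<close> by (rule tuple_statesE)
    have "map (st_enc A \<circ> f) qs = map (st_enc A \<circ> g) qs"
      using enc by (intro encode_tuple_inj) (simp_all add: n m)
    hence "\<forall>q\<in>set qs. f q = g q"
      using f g wf by (auto simp: wf_alg_def inj_on_def)
    thus "n = m" by (simp add: n m)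
  qed
qed (auto simp: wf_alg_def)

lemma accepts_parallel_alg:
  assumes "wf_alg A" and "q0 \<in> set qs"
  shows "accepts_alg (parallel_alg qs A \<sigma> u0 q0) w \<longleftrightarrow> accepts_alg A (ltransd \<sigma> u0 q0 w)"
  using assms run_alg_in_states[OF assms(1)]
  by (auto simp: accepts_alg_def run_parallel_alg intro: tuple_statesI)

lemma length_enc_parallel_alg_le:
  assumes "n \<in> tuple_states qs A" and "\<forall>p\<in>st_states A. length (st_enc A p) \<le> s"
  shows "length (st_enc (parallel_alg qs A \<sigma> u0 q0) n) \<le> 2 * length qs * s"
proof -
  obtain f where "n = to_nat (map f qs)" and "\<forall>q\<in>set qs. f q \<in> st_states A"
    using assms(1) by (rule tuple_statesE)
  thus ?thesis using assms(2) length_encode_tuple_le[of "map (st_enc A \<circ> f) qs" s] by auto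
qed

lemma length_enc_run_parallel_alg_le:
  assumes "\<forall>q\<in>set qs. length (st_enc A (run_alg A (ltransd \<sigma> u0 q w))) \<le> s"
  shows "length (st_enc (parallel_alg qs A \<sigma> u0 q0) (run_alg (parallel_alg qs A \<sigma> u0 q0) w))
      \<le> 2 * length qs * s"
  using assms length_encode_tuple_le[of "map (\<lambda>q. st_enc A (run_alg A (ltransd \<sigma> u0 q w))) qs" s]
  by (simp add: run_parallel_alg comp_def)

end

definition left_transduction_from :: "('q, 'a, 'b) mealy \<Rightarrow> 'q \<Rightarrow> 'a list \<Rightarrow> 'b list" where
  "left_transduction_from M q x = rev (mealy_tau M q (rev x))"

lemma length_mealy_tau [simp]: "length (mealy_tau M q xs) = length xs"
  by (induction xs arbitrary: q) auto

lemma length_left_transduction_from [simp]: "length (left_transduction_from M q x) = length x"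
  by (simp add: left_transduction_from_def)

lemma take_mealy_tau: "mealy_tau M q (take j xs) = take j (mealy_tau M q xs)"
  by (induction xs arbitrary: q j) (auto simp: take_Cons split: nat.splits)

lemma drop_left_transduction_from:
  "drop k (left_transduction_from M q z) = left_transduction_from M q (drop k z)"
  by (simp add: left_transduction_from_def drop_rev rev_drop take_mealy_tau)

lemma last_n_left_transduction_from:
  "n \<le> length z \<Longrightarrow> last_n p n (left_transduction_from M q z) = left_transduction_from M q (last_n p' n z)"
  using drop_left_transduction_from[of "length z - n" M q z] by (simp add: last_n_def)

lemma last_n_replicate_append: "last_n p n (replicate n p @ w) = last_n p n w"
  by (auto simp: last_n_def)

lemma ltransd_mealy_delta:
  "ltransd (m_delta M) (\<lambda>q. left_transduction_from M q u) q w = left_transduction_from M q (u @ w)"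
  by (induction w arbitrary: q rule: rev_induct)
    (auto simp: left_transduction_from_def split: prod.splits)

definition pop_ext :: "('q, 'a, 'b) mealy \<Rightarrow> 'q \<Rightarrow> 'a option \<Rightarrow> 'q \<times> 'b option" where
  "pop_ext M p x = (case x of Some a \<Rightarrow> apsnd Some (m_delta M p a) | None \<Rightarrow> (p, None))"

lemma wnd_snoc: "wnd (w @ [x]) = wnd_step (wnd w) x"
  by (simp add: wnd_def)

lemma wnd_ltransd_pop_ext:
  "wnd (ltransd (pop_ext M) (\<lambda>_. []) q w) = left_transduction_from M q (wnd w)"
proof (induction w arbitrary: q rule: rev_induct)
  case Nil
  thus ?case by (simp add: wnd_def left_transduction_from_def)
next
  case (snoc x w)
  show ?case
  proof (cases x)
    case None
    thus ?thesis using snoc drop_left_transduction_from[of 1 M q "wnd w"]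
      by (simp add: wnd_snoc pop_ext_def drop_Suc)
  next
    case (Some a)
    thus ?thesis using snoc
      by (simp add: wnd_snoc pop_ext_def left_transduction_from_def split: prod.splits)
  qed
qed

lemma alg_space_le_iff:
  "alg_space A \<le> m \<longleftrightarrow> (\<forall>p\<in>st_states A. enat (length (st_enc A p)) \<le> m)"
  by (simp add: alg_space_def SUP_le_iff)

lemma var_space_le_iff:
  "var_space A n \<le> m \<longleftrightarrow> (\<forall>u u'. prefix u' u \<longrightarrow> (\<forall>v. prefix v u \<longrightarrow> length (wnd v) \<le> n)
      \<longrightarrow> enat (length (st_enc A (run_alg A u'))) \<le> m)"
  unfolding var_space_def Sup_le_iff by blast

lemma length_enc_run_le_var_space:
  assumes "prefix u' u" and "\<forall>v. prefix v u \<longrightarrow> length (wnd v) \<le> n"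
  shows "enat (length (st_enc A (run_alg A u'))) \<le> var_space A n"
  unfolding var_space_def using assms by (intro Sup_upper) blast

lemma le_enat_mult_if:
  assumes "c > 0" and "\<And>s. y = enat s \<Longrightarrow> x \<le> enat (c * s)"
  shows "x \<le> enat c * y"
  using assms by (cases y) (simp_all add: imult_is_infinity)

lemma INF_le_mult_INF:
  fixes f :: "'x \<Rightarrow> enat" and g :: "'y \<Rightarrow> enat"
  assumes "c > 0" and "\<And>a. a \<in> S \<Longrightarrow> \<exists>b\<in>T. g b \<le> enat c * f a"
  shows "(INF b\<in>T. g b) \<le> enat c * (INF a\<in>S. f a)"
proof (cases "S = {}")
  case True
  thus ?thesis using assms(1) by (simp add: imult_is_infinity top_enat_def)
next
  case False
  hence "(INF a\<in>S. f a) \<in> f ` S"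
    unfolding Inf_enat_def by (auto intro: LeastI)
  then obtain a where "a \<in> S" and "f a = (INF a\<in>S. f a)" by auto
  moreover from assms(2)[OF \<open>a \<in> S\<close>] obtain b where "b \<in> T" "g b \<le> enat c * f a" by blast
  ultimately show ?thesis by (metis INF_lower order_trans)
qed

lemma bigO_enat_mult:
  assumes "bigO_enat f s" and "\<And>n. g n \<le> enat c * f n"
  shows "bigO_enat g s"
proof -
  obtain c0 N where f: "\<forall>n\<ge>N. \<exists>k. f n = enat k \<and> real k \<le> c0 * s n"
    using assms(1) unfolding bigO_enat_def by blast
  have "\<exists>k. g n = enat k \<and> real k \<le> (real c * c0) * s n" if "n \<ge> N" for n
  proof -
    obtain k where k: "f n = enat k" "real k \<le> c0 * s n" using f \<open>n \<ge> N\<close> by blast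
    obtain k' where k': "g n = enat k'" "k' \<le> c * k"
      using assms(2)[of n] k(1) by (cases "g n") auto
    have "real k' \<le> real c * real k" using k'(2) by (metis of_nat_le_iff of_nat_mult)
    also have "\<dots> \<le> real c * (c0 * s n)" using k(2) by (simp add: mult_left_mono)
    finally show ?thesis using k'(1) by (simp add: mult.assoc)
  qed
  thus ?thesis unfolding bigO_enat_def by blast
qed

lemma card_m_states_pos: "wf_mealy M \<Longrightarrow> 0 < card (m_states M)"
  by (auto simp: wf_mealy_def card_gt_0_iff)

lemma obtain_m_states_list:
  assumes "wf_mealy M"
  obtains qs where "set qs = m_states M" and "length qs = card (m_states M)"
  using assms by (metis distinct_card finite_distinct_list wf_mealy_def)

context
  fixes M :: "('q, 'a, 'b) mealy" and K :: "'a list set" and L :: "'b list set"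
  assumes wf_M: "wf_mealy M" and reduction: "is_left_reduction M K L"
begin

lemma left_reduction_iff: "x \<in> K \<longleftrightarrow> left_transduction_from M (m_init M) x \<in> L"
  using reduction
  by (simp add: is_left_reduction_def left_transduction_def left_transduction_from_def)

lemma fixed_alg_of_reduction:
  assumes A: "is_fixed_alg padL L n A"
  shows "\<exists>B. is_fixed_alg padK K n B \<and> alg_space B \<le> enat (2 * card (m_states M)) * alg_space A"
proof -
  obtain qs where qs: "set qs = m_states M" "length qs = card (m_states M)"
    using wf_M by (rule obtain_m_states_list)
  have closed: "\<forall>q\<in>set qs. \<forall>x. fst (m_delta M q x) \<in> set qs"
    and init: "m_init M \<in> set qs" using wf_M qs(1) by (auto simp: wf_mealy_def)
  have wf_A: "wf_alg A" using A by (simp add: is_fixed_alg_def)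
  define B where "B = parallel_alg qs A (m_delta M)
      (\<lambda>q. left_transduction_from M q (replicate n padK)) (m_init M)"
  have "accepts_alg B w \<longleftrightarrow> last_n padK n w \<in> K" for w
  proof -
    have "accepts_alg B w
        \<longleftrightarrow> last_n padL n (left_transduction_from M (m_init M) (replicate n padK @ w)) \<in> L"
      using A unfolding B_def accepts_parallel_alg[OF closed wf_A init] ltransd_mealy_delta
      by (simp add: is_fixed_alg_def)
    also have "\<dots> \<longleftrightarrow> left_transduction_from M (m_init M) (last_n padK n w) \<in> L"
      by (simp add: last_n_left_transduction_from[where p' = padK] last_n_replicate_append)
    finally show ?thesis by (simp add: left_reduction_iff)
  qed
  hence "is_fixed_alg padK K n B"
    unfolding is_fixed_alg_def B_def using wf_parallel_alg[OF closed wf_A] by blast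
  moreover have "alg_space B \<le> enat (2 * card (m_states M)) * alg_space A"
  proof (rule le_enat_mult_if)
    fix s assume "alg_space A = enat s"
    hence "\<forall>p\<in>st_states A. length (st_enc A p) \<le> s"
      using alg_space_le_iff[of A "enat s"] by simp
    thus "alg_space B \<le> enat (2 * card (m_states M) * s)"
      unfolding alg_space_le_iff B_def
      using length_enc_parallel_alg_le[OF closed] qs(2) by simp
  qed (use card_m_states_pos[OF wf_M] in simp)
  ultimately show ?thesis by blast
qed

lemma var_alg_of_reduction:
  assumes A: "is_var_alg L A"
  shows "\<exists>B. is_var_alg K B \<and> (\<forall>n. var_space B n \<le> enat (2 * card (m_states M)) * var_space A n)"
proof -
  obtain qs where qs: "set qs = m_states M" "length qs = card (m_states M)"
    using wf_M by (rule obtain_m_states_list)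
  have closed: "\<forall>q\<in>set qs. \<forall>x. fst (pop_ext M q x) \<in> set qs"
    and init: "m_init M \<in> set qs"
    using wf_M qs(1) by (auto simp: wf_mealy_def pop_ext_def split: option.splits)
  have wf_A: "wf_alg A" using A by (simp add: is_var_alg_def)
  define B where "B = parallel_alg qs A (pop_ext M) (\<lambda>_. []) (m_init M)"
  have "accepts_alg B w \<longleftrightarrow> wnd w \<in> K" for w
    using A unfolding B_def accepts_parallel_alg[OF closed wf_A init] is_var_alg_def
    by (simp add: wnd_ltransd_pop_ext left_reduction_iff)
  hence "is_var_alg K B"
    unfolding is_var_alg_def B_def using wf_parallel_alg[OF closed wf_A] by blast
  moreover have "var_space B n \<le> enat (2 * card (m_states M)) * var_space A n" for n
  proof (rule le_enat_mult_if)
    fix s assume s: "var_space A n = enat s"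
    have "length (st_enc A (run_alg A (ltransd (pop_ext M) (\<lambda>_. []) q u'))) \<le> s"
      if "prefix u' u" and u: "\<forall>v. prefix v u \<longrightarrow> length (wnd v) \<le> n" for u u' q
    proof -
      have "length (wnd v) \<le> n" if v: "prefix v (ltransd (pop_ext M) (\<lambda>_. []) q u')" for v
      proof -
        obtain w' q' where "prefix w' u'" and "v = ltransd (pop_ext M) (\<lambda>_. []) q' w'"
          using v by (rule prefix_ltransdE)
        moreover from \<open>prefix w' u'\<close> \<open>prefix u' u\<close> have "prefix w' u"
          by (rule prefix_order.trans)
        ultimately show ?thesis using u by (simp add: wnd_ltransd_pop_ext)
      qed
      hence "enat (length (st_enc A (run_alg A (ltransd (pop_ext M) (\<lambda>_. []) q u')))) \<le> var_space A n"
        by (intro length_enc_run_le_var_space[where u = "ltransd (pop_ext M) (\<lambda>_. []) q u'"]) auto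
      thus ?thesis using s by simp
    qed
    thus "var_space B n \<le> enat (2 * card (m_states M) * s)"
      unfolding var_space_le_iff B_def
      using length_enc_run_parallel_alg_le[OF closed] qs(2) by (metis enat_ord_simps(1))
  qed (use card_m_states_pos[OF wf_M] in simp)
  ultimately show ?thesis by blast
qed

end

theorem lemma3p3:
  fixes M :: "('q, 'a::finite, 'b::finite) mealy"
    and K :: "'a list set" and L :: "'b list set" and d :: nat
  assumes "wf_mealy M" and "card (m_states M) = d"
    and "is_left_reduction M K L"
  shows "(\<forall>padK padL n. F_space padK K n \<le> enat (2 * d) * F_space padL L n)
       \<and> (\<forall>n. V_space K n \<le> enat (2 * d) * V_space L n)
       \<and> (\<forall>s padK padL. L \<in> F_class padL s \<longrightarrow> K \<in> F_class padK s)
       \<and> (\<forall>s. L \<in> V_class s \<longrightarrow> K \<in> V_class s)"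
proof (intro conjI allI impI)
  note fixed = fixed_alg_of_reduction[OF assms(1,3), unfolded assms(2)]
  note var = var_alg_of_reduction[OF assms(1,3), unfolded assms(2)]
  have d: "0 < 2 * d" using card_m_states_pos[OF assms(1)] assms(2) by simp
  show "F_space padK K n \<le> enat (2 * d) * F_space padL L n" for padK padL n
    unfolding F_space_def using fixed by (intro INF_le_mult_INF[OF d]) blast
  show "V_space K n \<le> enat (2 * d) * V_space L n" for n
    unfolding V_space_def using var by (intro INF_le_mult_INF[OF d]) blast
  show "K \<in> F_class padK s" if L: "L \<in> F_class padL s" for s padK padL
  proof -
    obtain A where A: "\<forall>n. is_fixed_alg padL L n (A n)" and "bigO_enat (\<lambda>n. alg_space (A n)) s"
      using L unfolding F_class_def by blast
    moreover obtain B where "\<forall>n. is_fixed_alg padK K n (B n)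
        \<and> alg_space (B n) \<le> enat (2 * d) * alg_space (A n)"
      using fixed[of padL n "A n" padK for n] A by metis
    ultimately show ?thesis unfolding F_class_def by (blast intro: bigO_enat_mult)
  qed
  show "K \<in> V_class s" if L: "L \<in> V_class s" for s
  proof -
    obtain A where "is_var_alg L A" and "bigO_enat (var_space A) s"
      using L unfolding V_class_def by blast
    thus ?thesis unfolding V_class_def using var by (blast intro: bigO_enat_mult)
  qed
qed

end
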